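(* Let $m\ge1$ be an integer and $H>1$ real. Let $L_m=\{\boldsymbol\theta\in\mathbb R^m: 0\le\theta_1\le\cdots\le\theta_m\le\pi\}$ and define $f=(f_1,\ldots,f_{m+1}):(1,H]\times L_m\to\mathbb R^{m+1}$ by letting $f_j(y,\theta_1,\ldots,\theta_m)=a_j$, where \[ (t-y)(t-y^{-1})\prod_{k=1}^m(t-e^{i\theta_k})(t-e^{-i\theta_k})=t^{2m+2}+a_1t^{2m+1}+\cdots+a_{m+1}t^{m+1}+\cdots+a_1t+1 . \] Then the Jacobian $J_f=\left|\frac{\partial(f_1,\ldots,f_{m+1})}{\partial(y,\theta_1,\ldots,\theta_m)}\right|$ equals \[ J_f(y,\theta_1,\ldots,\theta_m)=2^{\frac{m(m+1)}{2}}\left(1-\frac{1}{y^2}\right)\prod_{l=1}^{m}\left(y+\frac1y-2\cos\theta_l\right)\prod_{l=1}^m\sin\theta_l\prod_{1\le i<j\le m}\left|\cos\theta_i-\cos\theta_j\right|. \] *)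

theory Defs
  imports Complex_Main "HOL-Computational_Algebra.Polynomial" "Jordan_Normal_Form.Determinant"
begin

text \<open>Coordinates: x 0 = y, x k = theta_k for k = 1..m.\<close>

definition recip_poly :: "nat \<Rightarrow> (nat \<Rightarrow> real) \<Rightarrow> complex poly" where
  "recip_poly m x =
     [:- complex_of_real (x 0), 1:] * [:- complex_of_real (1 / x 0), 1:] *
     (\<Prod>k\<in>{1..m}. [:- exp (\<i> * complex_of_real (x k)), 1:] *
                    [:- exp (- \<i> * complex_of_real (x k)), 1:])"

text \<open>a_j = coefficient of t^(2m+2-j) (these coefficients are real).\<close>
definition coef_fun :: "nat \<Rightarrow> nat \<Rightarrow> (nat \<Rightarrow> real) \<Rightarrow> real" where
  "coef_fun m j x = Re (coeff (recip_poly m x) (2 * m + 2 - j))"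

definition partial_at :: "((nat \<Rightarrow> real) \<Rightarrow> real) \<Rightarrow> (nat \<Rightarrow> real) \<Rightarrow> nat \<Rightarrow> real" where
  "partial_at F x c = (THE D. ((\<lambda>t. F (x(c := t))) has_real_derivative D) (at (x c)))"

definition jacobian_f :: "nat \<Rightarrow> (nat \<Rightarrow> real) \<Rightarrow> real" where
  "jacobian_f m x = \<bar>det (mat (m + 1) (m + 1) (\<lambda>(i, c). partial_at (coef_fun m (i + 1)) x c))\<bar>"

end

theory Submission
  imports Defs
begin

(* The coefficients of \<Prod>l=0..m (t^2 - r_l t + 1), where r_0 = y + 1/y and r_l = 2 cos \<theta>_l,
   depend on each coordinate only through r_l, so by the chain rule the Jacobian is
   \<Prod>_l |r_l'| times the Jacobian of (r_0, ..., r_m) \<mapsto> coefficients.  Column c of the latter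
   holds the coefficients of \<Prod>_(l\<noteq>c) (t^2 - r_l t + 1); since t^2 - r t + 1 = t ((t + 1/t) - r),
   these are the coefficients of \<Prod>_(l\<noteq>c) (s - r_l) in the basis (1 + t^2)^k t^(m-k), which
   is a unitriangular change of basis.  Multiplying the matrix of these leave-one-out
   polynomials by the Vandermonde matrix of the r_l gives the diagonal matrix of the values
   \<Prod>_(l\<noteq>c) (r_c - r_l), so its determinant has absolute value \<Prod>_(i<j) |r_i - r_j|. *)

definition vandermonde_mat :: "nat \<Rightarrow> (nat \<Rightarrow> 'a::comm_ring_1) \<Rightarrow> 'a mat" where
  "vandermonde_mat n r = mat (Suc n) (Suc n) (\<lambda>(p, k). r p ^ (n - k))"

lemma vandermonde_mat_carrier [simp]: "vandermonde_mat n r \<in> carrier_mat (Suc n) (Suc n)"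
  by (simp add: vandermonde_mat_def)

lemma det_lower_unitriangular:
  assumes "A \<in> carrier_mat n n" "\<And>i j. i < j \<Longrightarrow> j < n \<Longrightarrow> A $$ (i, j) = 0"
    and "\<And>i. i < n \<Longrightarrow> A $$ (i, i) = 1"
  shows "det A = 1"
  using assms by (simp add: det_lower_triangular[of n] prod_list_diag_prod)

lemma vandermonde_mat_mult_column_elim:
  fixes c :: "'a::comm_ring_1" and n :: nat
  defines "N \<equiv> Suc (Suc n)"
  shows "vandermonde_mat (Suc n) r * mat N N (\<lambda>(j, k). if j = k then 1 else if j = Suc k then - c else 0)
    = mat N N (\<lambda>(p, k). if k = Suc n then 1 else (r p - c) * r p ^ (n - k))"
    (is "?V * ?M = ?W")
proof (rule eq_matI)
  fix p k assume "p < dim_row ?W" "k < dim_col ?W"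
  then have p: "p < N" and k: "k < N" by auto
  have "(?V * ?M) $$ (p, k) = (\<Sum>j<N. ?V $$ (p, j) * ?M $$ (j, k))"
    using p k by (simp add: N_def vandermonde_mat_def scalar_prod_def lessThan_atLeast0)
  also have "\<dots> = (\<Sum>j<N. (if j = k then ?V $$ (p, j) else 0) + (if j = Suc k then - c * ?V $$ (p, j) else 0))"
    by (rule sum.cong) (auto simp: k)
  also have "\<dots> = ?V $$ (p, k) + (if Suc k < N then - c * ?V $$ (p, Suc k) else 0)"
    using k by (simp add: sum.distrib)
  also have "\<dots> = (if k = Suc n then 1 else (r p - c) * r p ^ (n - k))"
    using p k by (auto simp: N_def vandermonde_mat_def algebra_simps Suc_diff_le)
  finally show "(?V * ?M) $$ (p, k) = ?W $$ (p, k)"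
    using p k by simp
qed (auto simp: N_def vandermonde_mat_def)

lemma det_vandermonde_mat_Suc:
  "det (vandermonde_mat (Suc n) r) = (\<Prod>i\<le>n. r i - r (Suc n)) * det (vandermonde_mat n r)"
proof -
  define N where "N = Suc (Suc n)"
  define c where "c = r (Suc n)"
  define M where "M = mat N N (\<lambda>(j, k). if j = k then 1 else if j = Suc k then - c else 0)"
  define W where "W = mat N N (\<lambda>(p, k). if k = Suc n then 1 else (r p - c) * r p ^ (n - k))"
  have M: "M \<in> carrier_mat N N" and W: "W \<in> carrier_mat N N"
    by (simp_all add: M_def W_def)
  have VM: "vandermonde_mat (Suc n) r * M = W"
    unfolding M_def W_def N_def by (rule vandermonde_mat_mult_column_elim)
  have "det M = 1"
    by (rule det_lower_unitriangular[OF M]) (auto simp: M_def)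
  then have "det (vandermonde_mat (Suc n) r) = det W"
    using det_mult[OF _ M, of "vandermonde_mat (Suc n) r"] by (simp add: VM N_def)
  \<comment> \<open>the last row of W is (0, ..., 0, 1)\<close>
  also have "\<dots> = (\<Sum>j<N. W $$ (Suc n, j) * cofactor W (Suc n) j)"
    by (rule laplace_expansion_row[OF W]) (simp add: N_def)
  also have "\<dots> = cofactor W (Suc n) (Suc n)"
    by (subst sum.remove[of _ "Suc n"]) (auto simp: N_def W_def c_def)
  also have "\<dots> = det (mat\<^sub>r (Suc n) (Suc n) (\<lambda>i. (r i - c) \<cdot>\<^sub>v vec (Suc n) (\<lambda>k. r i ^ (n - k))))"
    unfolding cofactor_def by (simp, rule arg_cong[of _ _ det])
      (auto simp: mat_delete_def W_def N_def)
  also have "\<dots> = (\<Prod>i<Suc n. r i - c) * det (mat\<^sub>r (Suc n) (Suc n) (\<lambda>i. vec (Suc n) (\<lambda>k. r i ^ (n - k))))"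
    by (subst det_rows_mul) (auto simp: lessThan_atLeast0)
  also have "mat\<^sub>r (Suc n) (Suc n) (\<lambda>i. vec (Suc n) (\<lambda>k. r i ^ (n - k))) = vandermonde_mat n r"
    by (rule eq_matI) (auto simp: vandermonde_mat_def)
  finally show ?thesis by (simp add: c_def lessThan_Suc_atMost)
qed

lemma det_vandermonde_mat: "det (vandermonde_mat n r) = (\<Prod>j\<le>n. \<Prod>i<j. r i - r j)"
proof (induction n)
  case 0
  then show ?case by (simp add: det_single vandermonde_mat_def)
next
  case (Suc n)
  then show ?case by (simp add: det_vandermonde_mat_Suc lessThan_Suc_atMost mult.commute)
qed

lemma poly_eq_sum_coeff:
  fixes p :: "'a::comm_semiring_1 poly"
  assumes "degree p \<le> n"
  shows "poly p x = (\<Sum>i\<le>n. coeff p i * x ^ i)"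
  unfolding poly_altdef
  by (rule sum.mono_neutral_left) (use assms in \<open>auto simp: coeff_eq_0\<close>)

definition leave_one_out_poly :: "nat \<Rightarrow> (nat \<Rightarrow> 'a::comm_ring_1) \<Rightarrow> nat \<Rightarrow> 'a poly" where
  "leave_one_out_poly n r c = (\<Prod>l\<in>{0..n} - {c}. [:- r l, 1:])"

definition leave_one_out_mat :: "nat \<Rightarrow> (nat \<Rightarrow> 'a::comm_ring_1) \<Rightarrow> 'a mat" where
  "leave_one_out_mat n r = mat (Suc n) (Suc n) (\<lambda>(k, c). coeff (leave_one_out_poly n r c) (n - k))"

lemma leave_one_out_mat_carrier [simp]: "leave_one_out_mat n r \<in> carrier_mat (Suc n) (Suc n)"
  by (simp add: leave_one_out_mat_def)

lemma degree_leave_one_out_poly: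
  fixes r :: "nat \<Rightarrow> 'a::idom"
  assumes "c \<le> n"
  shows "degree (leave_one_out_poly n r c) = n"
  using assms by (simp add: leave_one_out_poly_def degree_prod_eq_sum_degree card_Diff_singleton)

lemma vandermonde_mat_mult_leave_one_out_mat:
  fixes r :: "nat \<Rightarrow> 'a::idom"
  shows "vandermonde_mat n r * leave_one_out_mat n r
    = mat (Suc n) (Suc n) (\<lambda>(p, c). if p = c then (\<Prod>l\<in>{0..n} - {c}. r c - r l) else 0)"
    (is "_ = ?D")
proof (rule eq_matI)
  fix p c assume "p < dim_row ?D" "c < dim_col ?D"
  then have p: "p \<le> n" and c: "c \<le> n" by auto
  let ?Q = "leave_one_out_poly n r c"
  have "(vandermonde_mat n r * leave_one_out_mat n r) $$ (p, c)
      = (\<Sum>k<Suc n. r p ^ (Suc n - Suc k) * coeff ?Q (Suc n - Suc k))"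
    using p c by (simp add: vandermonde_mat_def leave_one_out_mat_def scalar_prod_def lessThan_atLeast0)
  also have "\<dots> = (\<Sum>k<Suc n. coeff ?Q k * r p ^ k)"
    by (subst sum.nat_diff_reindex) (simp add: mult.commute)
  also have "\<dots> = poly ?Q (r p)"
    using poly_eq_sum_coeff[of ?Q n "r p"] degree_leave_one_out_poly[OF c, of r]
    by (simp add: lessThan_Suc_atMost)
  also have "\<dots> = (\<Prod>l\<in>{0..n} - {c}. r p - r l)"
    by (simp add: leave_one_out_poly_def poly_prod)
  finally show "(vandermonde_mat n r * leave_one_out_mat n r) $$ (p, c) = ?D $$ (p, c)"
    using p c by auto
qed (auto simp: vandermonde_mat_def leave_one_out_mat_def)

lemma det_vandermonde_mult_det_leave_one_out_mat:
  fixes r :: "nat \<Rightarrow> 'a::idom"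
  shows "det (vandermonde_mat n r) * det (leave_one_out_mat n r) = (\<Prod>c\<le>n. \<Prod>l\<in>{0..n} - {c}. r c - r l)"
proof -
  have "det (vandermonde_mat n r) * det (leave_one_out_mat n r) = det (vandermonde_mat n r * leave_one_out_mat n r)"
    by (simp add: det_mult[of _ "Suc n"])
  also have "\<dots> = (\<Prod>c\<le>n. \<Prod>l\<in>{0..n} - {c}. r c - r l)"
    unfolding vandermonde_mat_mult_leave_one_out_mat
    by (subst det_upper_triangular[of _ "Suc n"]) (auto simp: prod_list_diag_prod atLeast0LessThan lessThan_Suc_atMost)
  finally show ?thesis .
qed

definition abs_diff_prod :: "nat \<Rightarrow> (nat \<Rightarrow> 'a::linordered_idom) \<Rightarrow> 'a" where
  "abs_diff_prod n r = (\<Prod>j\<le>n. \<Prod>i<j. \<bar>r i - r j\<bar>)"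

lemma abs_prod_leave_one_out_diff:
  fixes r :: "nat \<Rightarrow> 'a::linordered_idom"
  shows "\<bar>\<Prod>c\<le>n. \<Prod>l\<in>{0..n} - {c}. r c - r l\<bar> = abs_diff_prod n r ^ 2"
proof -
  have split: "{0..n} - {c} = {..<c} \<union> {Suc c..n}" if "c \<le> n" for c
    using that by auto
  have "\<bar>\<Prod>c\<le>n. \<Prod>l\<in>{0..n} - {c}. r c - r l\<bar>
      = (\<Prod>c\<le>n. (\<Prod>l<c. \<bar>r c - r l\<bar>) * (\<Prod>l\<in>{Suc c..n}. \<bar>r c - r l\<bar>))"
    unfolding abs_prod by (rule prod.cong[OF refl], subst split) (auto intro: prod.union_disjoint)
  also have "\<dots> = (\<Prod>c\<le>n. (\<Prod>l<c. \<bar>r l - r c\<bar>) * (\<Prod>l\<in>{Suc c..n}. \<bar>r c - r l\<bar>))"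
    by (simp add: abs_minus_commute)
  also have "\<dots> = abs_diff_prod n r * (\<Prod>c<n. \<Prod>l\<in>{Suc c..n}. \<bar>r c - r l\<bar>)"
    by (simp add: prod.distrib abs_diff_prod_def lessThan_Suc_atMost[symmetric])
  also have "(\<Prod>c<n. \<Prod>l\<in>{Suc c..n}. \<bar>r c - r l\<bar>) = abs_diff_prod n r"
    unfolding abs_diff_prod_def by (rule prod.nested_swap'[symmetric])
  finally show ?thesis by (simp add: power2_eq_square)
qed

lemma abs_det_leave_one_out_mat:
  fixes r :: "nat \<Rightarrow> 'a::linordered_idom"
  shows "\<bar>det (leave_one_out_mat n r)\<bar> = abs_diff_prod n r"
proof (cases "\<exists>j\<le>n. \<exists>i<j. r i = r j")
  case True
  then obtain i j where ij: "j \<le> n" "i < j" "r i = r j" by blast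
  then have "abs_diff_prod n r = 0"
    unfolding abs_diff_prod_def
    by (intro prod_zero bexI[of _ j] bexI[of _ i]) auto
  moreover have "det (leave_one_out_mat n r) = 0"
  proof (rule det_identical_columns[of _ "Suc n" i j])
    have e1: "{0..n} - {i} = insert j ({0..n} - {i, j})" and e2: "{0..n} - {j} = insert i ({0..n} - {i, j})"
      using ij by auto
    have "leave_one_out_poly n r i = leave_one_out_poly n r j"
      unfolding leave_one_out_poly_def e1 e2 using ij by simp
    then show "col (leave_one_out_mat n r) i = col (leave_one_out_mat n r) j"
      using ij(1,2) by (intro eq_vecI) (auto simp: leave_one_out_mat_def)
  qed (use ij in auto)
  ultimately show ?thesis by simp
next
  case False
  then have pos: "abs_diff_prod n r > 0"
    unfolding abs_diff_prod_def by (intro prod_pos) auto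
  have "\<bar>det (vandermonde_mat n r)\<bar> = abs_diff_prod n r"
    by (simp add: det_vandermonde_mat abs_diff_prod_def abs_prod)
  then have "abs_diff_prod n r * \<bar>det (leave_one_out_mat n r)\<bar> = abs_diff_prod n r ^ 2"
    using det_vandermonde_mult_det_leave_one_out_mat[where n=n and r=r] abs_prod_leave_one_out_diff[where n=n and r=r]
    by (metis abs_mult)
  with pos show ?thesis by (simp add: power2_eq_square)
qed

lemma poly_eqI_nonzero:
  fixes p q :: "'a::{idom, ring_char_0} poly"
  assumes "\<And>t. t \<noteq> 0 \<Longrightarrow> poly p t = poly q t"
  shows "p = q"
proof (rule ccontr)
  assume "p \<noteq> q"
  then have "finite {t. poly (p - q) t = 0}"
    by (intro poly_roots_finite) simp
  moreover have "- {0} \<subseteq> {t. poly (p - q) t = 0}"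
    using assms by auto
  ultimately have "finite (insert 0 (- {0::'a}))"
    using finite_subset by blast
  moreover have "insert 0 (- {0}) = (UNIV :: 'a set)"
    by auto
  ultimately show False
    by (simp add: infinite_UNIV_char_0)
qed

definition palindromic_basis :: "nat \<Rightarrow> nat \<Rightarrow> 'a::comm_ring_1 poly" where
  "palindromic_basis n k = [:1, 0, 1:] ^ k * monom 1 (n - k)"

lemma prod_palindromic_quadratics:
  fixes r :: "nat \<Rightarrow> 'a::field_char_0"
  assumes "finite S" and "card S = n"
  shows "(\<Prod>l\<in>S. [:1, - r l, 1:])
    = (\<Sum>k\<le>n. smult (coeff (\<Prod>l\<in>S. [:- r l, 1:]) k) (palindromic_basis n k))"
proof (rule poly_eqI_nonzero)
  fix t :: 'a assume t: "t \<noteq> 0"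
  let ?Q = "\<Prod>l\<in>S. [:- r l, 1:]"
  have "degree ?Q \<le> n"
    using assms by (simp add: degree_prod_eq_sum_degree)
  \<comment> \<open>t^2 - a t + 1 = t ((t + 1/t) - a)\<close>
  have "poly (\<Prod>l\<in>S. [:1, - r l, 1:]) t = (\<Prod>l\<in>S. t * (t + 1 / t - r l))"
    using t by (simp add: poly_prod) (rule prod.cong, auto simp: field_simps power2_eq_square)
  also have "\<dots> = t ^ n * poly ?Q (t + 1 / t)"
    using assms by (simp add: poly_prod prod.distrib)
  also have "\<dots> = (\<Sum>k\<le>n. coeff ?Q k * ((t + 1 / t) ^ k * t ^ k * t ^ (n - k)))"
    unfolding poly_eq_sum_coeff[OF \<open>degree ?Q \<le> n\<close>] sum_distrib_left
    by (rule sum.cong) (auto simp: mult_ac power_add[symmetric])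
  also have "\<dots> = (\<Sum>k\<le>n. coeff ?Q k * ((1 + t ^ 2) ^ k * t ^ (n - k)))"
  proof -
    have "(t + 1 / t) ^ k * t ^ k = (1 + t ^ 2) ^ k" for k
      using t by (simp add: power_mult_distrib[symmetric] field_simps power2_eq_square)
    then show ?thesis by simp
  qed
  also have "\<dots> = poly (\<Sum>k\<le>n. smult (coeff ?Q k) (palindromic_basis n k)) t"
    by (simp add: poly_sum palindromic_basis_def poly_monom power2_eq_square)
  finally show "poly (\<Prod>l\<in>S. [:1, - r l, 1:]) t = \<dots>" .
qed

lemma degree_palindromic_basis:
  assumes "k \<le> n"
  shows "degree (palindromic_basis n k :: 'a::idom poly) = n + k"
proof -
  have "degree (palindromic_basis n k :: 'a poly) = degree ([:1, 0, 1::'a:] ^ k) + degree (monom (1::'a) (n - k))"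
    unfolding palindromic_basis_def by (rule degree_mult_eq) auto
  then show ?thesis
    using assms by (simp add: degree_power_eq degree_monom_eq)
qed

lemma lead_coeff_palindromic_basis: "lead_coeff (palindromic_basis n k :: 'a::idom poly) = 1"
  by (simp add: palindromic_basis_def lead_coeff_mult lead_coeff_power degree_monom_eq)

definition palindromic_basis_mat :: "nat \<Rightarrow> 'a::comm_ring_1 mat" where
  "palindromic_basis_mat n = mat (Suc n) (Suc n) (\<lambda>(i, k). coeff (palindromic_basis n (n - k)) (2 * n - i))"

lemma palindromic_basis_mat_carrier [simp]: "palindromic_basis_mat n \<in> carrier_mat (Suc n) (Suc n)"
  by (simp add: palindromic_basis_mat_def)

lemma det_palindromic_basis_mat: "det (palindromic_basis_mat n :: 'a::idom mat) = 1"
proof (rule det_lower_unitriangular)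
  fix i k assume "i < k" "k < Suc n"
  then show "palindromic_basis_mat n $$ (i, k) = (0 :: 'a)"
    by (simp add: palindromic_basis_mat_def coeff_eq_0 degree_palindromic_basis)
next
  fix i assume "i < Suc n"
  then have "degree (palindromic_basis n (n - i) :: 'a poly) = 2 * n - i"
    by (simp add: degree_palindromic_basis)
  then have "coeff (palindromic_basis n (n - i) :: 'a poly) (2 * n - i) = 1"
    by (metis lead_coeff_palindromic_basis)
  with \<open>i < Suc n\<close> show "palindromic_basis_mat n $$ (i, i) = (1 :: 'a)"
    by (simp add: palindromic_basis_mat_def)
qed simp

definition leave_one_out_quadratics :: "nat \<Rightarrow> (nat \<Rightarrow> 'a::comm_ring_1) \<Rightarrow> nat \<Rightarrow> 'a poly" where
  "leave_one_out_quadratics n r c = (\<Prod>l\<in>{0..n} - {c}. [:1, - r l, 1:])"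

definition quadratics_coeff_mat :: "nat \<Rightarrow> (nat \<Rightarrow> 'a::comm_ring_1) \<Rightarrow> 'a mat" where
  "quadratics_coeff_mat n r = mat (Suc n) (Suc n) (\<lambda>(i, c). coeff (leave_one_out_quadratics n r c) (2 * n - i))"

lemma quadratics_coeff_mat_eq:
  fixes r :: "nat \<Rightarrow> 'a::field_char_0"
  shows "quadratics_coeff_mat n r = palindromic_basis_mat n * leave_one_out_mat n r"
    (is "_ = ?P")
proof (rule eq_matI)
  fix i c assume "i < dim_row ?P" "c < dim_col ?P"
  then have i: "i < Suc n" and c: "c < Suc n"
    by (auto simp: palindromic_basis_mat_def leave_one_out_mat_def)
  let ?Q = "leave_one_out_poly n r c"
  have "card ({0..n} - {c}) = n"
    using c by (simp add: card_Diff_singleton)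
  then have "quadratics_coeff_mat n r $$ (i, c)
      = coeff (\<Sum>k\<le>n. smult (coeff ?Q k) (palindromic_basis n k)) (2 * n - i)"
    using i c by (simp add: quadratics_coeff_mat_def leave_one_out_quadratics_def
        leave_one_out_poly_def prod_palindromic_quadratics)
  also have "\<dots> = (\<Sum>k<Suc n. coeff ?Q (Suc n - Suc k) * coeff (palindromic_basis n (Suc n - Suc k)) (2 * n - i))"
    unfolding coeff_sum lessThan_Suc_atMost[symmetric]
    by (subst sum.nat_diff_reindex) simp
  also have "\<dots> = ?P $$ (i, c)"
    using i c by (simp add: palindromic_basis_mat_def leave_one_out_mat_def scalar_prod_def
        lessThan_atLeast0 mult.commute)
  finally show "quadratics_coeff_mat n r $$ (i, c) = \<dots>" .
qed (auto simp: quadratics_coeff_mat_def palindromic_basis_mat_def leave_one_out_mat_def)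

lemma abs_det_quadratics_coeff_mat:
  fixes r :: "nat \<Rightarrow> 'a::linordered_field"
  shows "\<bar>det (quadratics_coeff_mat n r)\<bar> = abs_diff_prod n r"
  by (simp add: quadratics_coeff_mat_eq det_mult[of _ "Suc n"] det_palindromic_basis_mat
      abs_det_leave_one_out_mat)

lemma map_poly_of_real_mult:
  fixes p q :: "real poly"
  shows "map_poly (of_real :: real \<Rightarrow> 'a::{real_algebra_1, comm_ring_1}) (p * q)
    = map_poly of_real p * map_poly of_real q"
  by (rule poly_eqI) (simp add: coeff_map_poly coeff_mult of_real_sum)

lemma map_poly_of_real_prod:
  fixes f :: "'b \<Rightarrow> real poly"
  shows "map_poly (of_real :: real \<Rightarrow> 'a::{real_algebra_1, comm_ring_1}) (\<Prod>k\<in>S. f k)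
    = (\<Prod>k\<in>S. map_poly of_real (f k))"
  by (induction S rule: infinite_finite_induct) (auto simp: map_poly_of_real_mult)

lemma linear_factors_mult: "[:- a, 1:] * [:- b, 1:] = [:a * b, - (a + b), 1 :: 'a::comm_ring_1:]"
  by (simp add: algebra_simps)

lemma reciprocal_factors_mult:
  assumes "y \<noteq> 0"
  shows "[:- complex_of_real y, 1:] * [:- complex_of_real (1 / y), 1:] = map_poly of_real [:1, - (y + 1 / y), 1:]"
  using assms by (simp add: linear_factors_mult map_poly_pCons)

lemma conjugate_factors_mult:
  "[:- exp (\<i> * complex_of_real t), 1:] * [:- exp (- \<i> * complex_of_real t), 1:]
    = map_poly of_real [:1, - 2 * cos t, 1:]"
proof -
  have e1: "exp (\<i> * complex_of_real t) = cis t" and e2: "exp (- \<i> * complex_of_real t) = cis (- t)"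
    by (simp_all add: cis_conv_exp)
  have "cis t * cis (- t) = 1" and "cis t + cis (- t) = complex_of_real (2 * cos t)"
    by (simp_all add: cis_mult complex_eq_iff)
  then show ?thesis
    unfolding e1 e2 linear_factors_mult by (simp add: map_poly_pCons)
qed

(* trace_fun l (x l) is the sum \<rho> + 1/\<rho> of the l-th pair of reciprocal roots of recip_poly m x:
   \<rho> = y for l = 0 and \<rho> = exp (\<i> \<theta>_l) otherwise. *)
definition trace_fun :: "nat \<Rightarrow> real \<Rightarrow> real" where
  "trace_fun l t = (if l = 0 then t + 1 / t else 2 * cos t)"

lemma coef_fun_eq_coeff:
  assumes "x 0 \<noteq> 0"
  shows "coef_fun m j x = coeff (\<Prod>l\<in>{0..m}. [:1, - trace_fun l (x l), 1:]) (2 * m + 2 - j)"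
proof -
  have "{0..m} = insert 0 {1..m}" by auto
  then have "(\<Prod>l\<in>{0..m}. [:1, - trace_fun l (x l), 1:])
      = [:1, - (x 0 + 1 / x 0), 1:] * (\<Prod>l\<in>{1..m}. [:1, - 2 * cos (x l), 1:])"
    by (simp add: trace_fun_def)
  moreover have "recip_poly m x
      = map_poly of_real [:1, - (x 0 + 1 / x 0), 1:] * (\<Prod>l\<in>{1..m}. map_poly of_real [:1, - 2 * cos (x l), 1:])"
    unfolding recip_poly_def reciprocal_factors_mult[OF assms] conjugate_factors_mult ..
  ultimately have "recip_poly m x = map_poly of_real (\<Prod>l\<in>{0..m}. [:1, - trace_fun l (x l), 1:])"
    by (simp only: map_poly_of_real_mult map_poly_of_real_prod)
  then show ?thesis
    by (simp add: coef_fun_def coeff_map_poly)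
qed

lemma partial_atI_open:
  assumes "open U" "x c \<in> U" "\<And>t. t \<in> U \<Longrightarrow> F (x(c := t)) = G t"
    and "(G has_real_derivative D) (at (x c))"
  shows "partial_at F x c = D"
proof -
  have D: "((\<lambda>t. F (x(c := t))) has_real_derivative D) (at (x c))"
    using has_field_derivative_transform_within_open[OF assms(4,1,2)] assms(3) by metis
  show ?thesis
    unfolding partial_at_def
  proof (rule the_equality)
    fix D' assume "((\<lambda>t. F (x(c := t))) has_real_derivative D') (at (x c))"
    then show "D' = D" using D DERIV_unique by blast
  qed (rule D)
qed

lemma has_real_derivative_coeff_quadratic_mult:
  assumes "(g has_real_derivative g') (at t)"
  shows "((\<lambda>s. coeff ([:1, - g s, 1:] * R) (Suc k)) has_real_derivative - g' * coeff R k) (at t)"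
proof -
  have "coeff ([:1, a, 1:] * R) (Suc k) = a * coeff R k + (coeff R (Suc k) + coeff (pCons 0 R) k)" for a
    by simp
  then show ?thesis
    by (simp only:) (auto intro!: derivative_eq_intros assms)
qed

definition trace_deriv :: "nat \<Rightarrow> real \<Rightarrow> real" where
  "trace_deriv l t = (if l = 0 then 1 - 1 / t\<^sup>2 else - 2 * sin t)"

lemma has_real_derivative_trace_fun:
  assumes "l = 0 \<Longrightarrow> t \<noteq> 0"
  shows "(trace_fun l has_real_derivative trace_deriv l t) (at t)"
proof (cases "l = 0")
  case True
  then show ?thesis
    unfolding trace_fun_def trace_deriv_def using assms
    by (auto intro!: derivative_eq_intros simp: field_simps power2_eq_square)
next
  case False
  then show ?thesis
    unfolding trace_fun_def[abs_def] trace_deriv_def by (auto intro!: derivative_eq_intros)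
qed

lemma partial_at_coef_fun:
  assumes "x 0 \<noteq> 0" and "i \<le> m" and "c \<le> m"
  shows "partial_at (coef_fun m (Suc i)) x c
    = - trace_deriv c (x c) * coeff (leave_one_out_quadratics m (\<lambda>l. trace_fun l (x l)) c) (2 * m - i)"
proof -
  define U where "U = (if c = 0 then - {0} else (UNIV :: real set))"
  let ?R = "leave_one_out_quadratics m (\<lambda>l. trace_fun l (x l)) c"
  have "coef_fun m (Suc i) (x(c := t)) = coeff ([:1, - trace_fun c t, 1:] * ?R) (Suc (2 * m - i))"
    if "t \<in> U" for t
  proof -
    have "(x(c := t)) 0 \<noteq> 0"
      using that assms(1) by (auto simp: U_def)
    moreover have "2 * m + 2 - Suc i = Suc (2 * m - i)"
      using assms(2) by simp
    moreover have "(\<Prod>l\<in>{0..m}. [:1, - trace_fun l ((x(c := t)) l), 1:]) = [:1, - trace_fun c t, 1:] * ?R"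
      unfolding leave_one_out_quadratics_def using assms(3)
      by (subst prod.remove[of _ c]) (auto intro!: prod.cong)
    ultimately show ?thesis
      by (simp add: coef_fun_eq_coeff)
  qed
  moreover have "(trace_fun c has_real_derivative trace_deriv c (x c)) (at (x c))"
    using assms(1) by (intro has_real_derivative_trace_fun) simp
  ultimately show ?thesis
    using assms(1) has_real_derivative_coeff_quadratic_mult
    by (intro partial_atI_open[of U]) (auto simp: U_def simp del: coeff_mult)
qed

lemma det_scale_columns:
  assumes "A \<in> carrier_mat n n"
  shows "det (mat n n (\<lambda>(i, j). A $$ (i, j) * w j)) = det A * (\<Prod>j<n. w j)"
proof -
  have "det (mat n n (\<lambda>(i, j). A $$ (i, j) * w j))
      = (\<Sum>p | p permutes {0..<n}. signof p * (\<Prod>j<n. A $$ (p j, j) * w j))"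
    by (subst det_col[of _ n]) (auto intro!: sum.cong prod.cong dest: permutes_in_image)
  also have "\<dots> = det A * (\<Prod>j<n. w j)"
    by (simp add: det_col[OF assms] sum_distrib_right prod.distrib mult.assoc)
  finally show ?thesis .
qed

lemma jacobian_f_eq:
  assumes "x 0 \<noteq> 0"
  shows "jacobian_f m x = abs_diff_prod m (\<lambda>l. trace_fun l (x l)) * (\<Prod>c\<le>m. \<bar>trace_deriv c (x c)\<bar>)"
proof -
  let ?C = "quadratics_coeff_mat m (\<lambda>l. trace_fun l (x l))"
  have "mat (m + 1) (m + 1) (\<lambda>(i, c). partial_at (coef_fun m (i + 1)) x c)
      = mat (Suc m) (Suc m) (\<lambda>(i, c). ?C $$ (i, c) * - trace_deriv c (x c))"
    using assms by (auto intro!: eq_matI simp: partial_at_coef_fun quadratics_coeff_mat_def)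
  then have "jacobian_f m x = \<bar>det (mat (Suc m) (Suc m) (\<lambda>(i, c). ?C $$ (i, c) * - trace_deriv c (x c)))\<bar>"
    unfolding jacobian_f_def by simp
  also have "\<dots> = \<bar>det ?C\<bar> * (\<Prod>c<Suc m. \<bar>trace_deriv c (x c)\<bar>)"
    by (subst det_scale_columns[of _ "Suc m"]) (auto simp: quadratics_coeff_mat_def abs_mult abs_prod)
  finally show ?thesis
    by (simp add: abs_det_quadratics_coeff_mat lessThan_Suc_atMost)
qed

lemma abs_diff_prod_Suc:
  "abs_diff_prod (Suc n) r = (\<Prod>j\<le>n. \<bar>r 0 - r (Suc j)\<bar>) * abs_diff_prod n (\<lambda>i. r (Suc i))"
  unfolding abs_diff_prod_def prod.atMost_Suc_shift prod.lessThan_Suc_shift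
  by (simp add: prod.distrib)

lemma abs_diff_prod_scale:
  "abs_diff_prod n (\<lambda>i. a * r i) = \<bar>a\<bar> ^ (n * (n + 1) div 2) * abs_diff_prod n r"
proof -
  have "abs_diff_prod n (\<lambda>i. a * r i) = (\<Prod>j\<le>n. \<bar>a\<bar> ^ j * (\<Prod>i<j. \<bar>r i - r j\<bar>))"
    unfolding abs_diff_prod_def
    by (simp add: right_diff_distrib[symmetric] abs_mult prod.distrib)
  also have "\<dots> = \<bar>a\<bar> ^ (\<Sum>j\<le>n. j) * abs_diff_prod n r"
    by (simp add: prod.distrib power_sum abs_diff_prod_def)
  finally show ?thesis
    by (simp add: atMost_atLeast0 gauss_sum_nat)
qed

lemma abs_diff_prod_shift_eq_prod_pairs:
  "abs_diff_prod n (\<lambda>i. r (Suc i)) = (\<Prod>(i, j)\<in>{(i, j). 1 \<le> i \<and> i < j \<and> j \<le> Suc n}. \<bar>r i - r j\<bar>)"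
proof -
  have "abs_diff_prod n (\<lambda>i. r (Suc i)) = (\<Prod>(j, i)\<in>Sigma {..n} (\<lambda>j. {..<j}). \<bar>r (Suc i) - r (Suc j)\<bar>)"
    unfolding abs_diff_prod_def by (rule prod.Sigma) auto
  also have "\<dots> = (\<Prod>(i, j)\<in>{(i, j). 1 \<le> i \<and> i < j \<and> j \<le> Suc n}. \<bar>r i - r j\<bar>)"
    by (rule prod.reindex_bij_witness[where i = "\<lambda>(i, j). (j - 1, i - 1)" and j = "\<lambda>(j, i). (Suc i, Suc j)"])
      auto
  finally show ?thesis .
qed

lemma abs_diff_prod_traces:
  assumes "y > 0"
  shows "abs_diff_prod (Suc n) (\<lambda>l. trace_fun l ((\<theta>(0 := y)) l))
    = (\<Prod>l\<in>{1..Suc n}. y + 1 / y - 2 * cos (\<theta> l)) * 2 ^ (n * (n + 1) div 2)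
      * (\<Prod>(i, j)\<in>{(i, j). 1 \<le> i \<and> i < j \<and> j \<le> Suc n}. \<bar>cos (\<theta> i) - cos (\<theta> j)\<bar>)"
proof -
  have "y + 1 / y - 2 = (y - 1)\<^sup>2 / y"
    using assms by (simp add: field_simps power2_eq_square)
  then have "2 \<le> y + 1 / y"
    using assms by (smt (verit) divide_nonneg_pos zero_le_power2)
  then have "\<bar>y + 1 / y - 2 * cos t\<bar> = y + 1 / y - 2 * cos t" for t
    using cos_le_one[of t] by linarith
  then have "abs_diff_prod (Suc n) (\<lambda>l. trace_fun l ((\<theta>(0 := y)) l))
      = (\<Prod>j\<le>n. y + 1 / y - 2 * cos (\<theta> (Suc j))) * abs_diff_prod n (\<lambda>i. 2 * cos (\<theta> (Suc i)))"
    by (simp add: abs_diff_prod_Suc trace_fun_def)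
  also have "(\<Prod>j\<le>n. y + 1 / y - 2 * cos (\<theta> (Suc j))) = (\<Prod>l\<in>{1..Suc n}. y + 1 / y - 2 * cos (\<theta> l))"
    by (simp only: One_nat_def prod.atLeast1_atMost_eq lessThan_Suc_atMost)
  finally show ?thesis
    by (simp add: abs_diff_prod_scale abs_diff_prod_shift_eq_prod_pairs[of n "\<lambda>l. cos (\<theta> l)"])
qed

lemma prod_abs_trace_deriv:
  assumes "y > 1" and "\<And>l. l \<in> {1..m} \<Longrightarrow> 0 \<le> sin (\<theta> l)"
  shows "(\<Prod>c\<le>m. \<bar>trace_deriv c ((\<theta>(0 := y)) c)\<bar>) = (1 - 1 / y\<^sup>2) * 2 ^ m * (\<Prod>l\<in>{1..m}. sin (\<theta> l))"
proof -
  have "{..m} = insert 0 {1..m}" by auto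
  moreover have "1 / y\<^sup>2 < 1"
    using assms(1) by (simp add: one_less_power)
  ultimately show ?thesis
    using assms(2) by (simp add: trace_deriv_def prod.distrib)
qed

lemma le_of_le_Suc_steps:
  fixes f :: "nat \<Rightarrow> 'a::order"
  assumes "\<And>k. a \<le> k \<Longrightarrow> k < b \<Longrightarrow> f k \<le> f (Suc k)" and "a \<le> i" and "i \<le> j" and "j \<le> b"
  shows "f i \<le> f j"
  using assms(3,4) by (induction j rule: dec_induct) (use assms(1,2) in \<open>auto intro: order_trans\<close>)

theorem lemma2:
  fixes m :: nat and H y :: real and \<theta> :: "nat \<Rightarrow> real"
  assumes "m \<ge> 1" and "H > 1" and "1 < y" and "y \<le> H"
    and "0 \<le> \<theta> 1" and "\<And>k. 1 \<le> k \<Longrightarrow> k < m \<Longrightarrow> \<theta> k \<le> \<theta> (k + 1)" and "\<theta> m \<le> pi"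
  shows "jacobian_f m (\<theta>(0 := y)) =
    2 ^ (m * (m + 1) div 2) * (1 - 1 / y\<^sup>2)
    * (\<Prod>l\<in>{1..m}. y + 1 / y - 2 * cos (\<theta> l))
    * (\<Prod>l\<in>{1..m}. sin (\<theta> l))
    * (\<Prod>(i, j)\<in>{(i, j). 1 \<le> i \<and> i < j \<and> j \<le> m}. \<bar>cos (\<theta> i) - cos (\<theta> j)\<bar>)"
proof -
  obtain n where m: "m = Suc n"
    using assms(1) by (cases m) auto
  have "0 \<le> sin (\<theta> l)" if "l \<in> {1..m}" for l
  proof (rule sin_ge_zero)
    show "0 \<le> \<theta> l" and "\<theta> l \<le> pi"
      using that assms(5-7) le_of_le_Suc_steps[of 1 m \<theta>] by fastforce+
  qed
  then have "(\<Prod>c\<le>m. \<bar>trace_deriv c ((\<theta>(0 := y)) c)\<bar>) = (1 - 1 / y\<^sup>2) * 2 ^ m * (\<Prod>l\<in>{1..m}. sin (\<theta> l))"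
    using assms(3) by (rule prod_abs_trace_deriv[rotated])
  moreover have "abs_diff_prod m (\<lambda>l. trace_fun l ((\<theta>(0 := y)) l))
      = (\<Prod>l\<in>{1..m}. y + 1 / y - 2 * cos (\<theta> l)) * 2 ^ (n * (n + 1) div 2)
        * (\<Prod>(i, j)\<in>{(i, j). 1 \<le> i \<and> i < j \<and> j \<le> m}. \<bar>cos (\<theta> i) - cos (\<theta> j)\<bar>)"
    using abs_diff_prod_traces[of y n \<theta>] assms(3) unfolding m by simp
  moreover have "jacobian_f m (\<theta>(0 := y))
      = abs_diff_prod m (\<lambda>l. trace_fun l ((\<theta>(0 := y)) l)) * (\<Prod>c\<le>m. \<bar>trace_deriv c ((\<theta>(0 := y)) c)\<bar>)"
    using assms(3) by (intro jacobian_f_eq) simp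
  moreover have "2 ^ (n * (n + 1) div 2) * 2 ^ m = (2 :: real) ^ (m * (m + 1) div 2)"
    by (simp add: m power_add[symmetric] algebra_simps)
  ultimately show ?thesis
    by (simp only:) (simp add: mult_ac)
qed

end
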